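(* Assume $\|\mathbf{x}_t\|_\infty\le1$ for all $t$. For any $\tau\ge1$, let $\mathbf{z}_\tau=\mathbf{h}_{\tau^2}\hat{\mathbf{w}}_{\tau-1}-\mathbf{x}_{\tau^2}\mathbf{x}_{\tau^2}^\top\hat{\mathbf{w}}_{\tau-1}$. Then for all $i\in[d]$, $$|z_{\tau,i}|\le\frac{(d-1)(d-2)}{(k-1)(k-2)}\|\hat{\mathbf{w}}_{\tau-1}\|_1,\qquad\mathbb{E}_\tau[z_{\tau,i}^2]\le\frac{2(d-1)}{k-1}\|\hat{\mathbf{w}}_{\tau-1}\|_1^2.$$
   Context: Integers $3\le k\le d-3$, $[d]=\{1,\dots,d\}$. SAMPLING$(k,d,\mathbf{w})$ for nonzero $\mathbf{w}\in\mathbb{R}^d$: with $q_i=|w_i|/\|\mathbf{w}\|_1$, draw $I_1\in[d]$ with $\mathbb{P}(I_1=i)=q_i$, then $k-1$ distinct indices uniformly without replacement from $[d]\setminus\{I_1\}$; output the $k$-set $B$. At round $\tau$, $B_\tau=$SAMPLING$(k,d,\hat{\mathbf{w}}_{\tau-1})$ for a nonzero vector $\hat{\mathbf{w}}_{\tau-1}$ determined by $B_1,\dots,B_{\tau-1}$ ($\hat{\mathbf{w}}_0=\frac1d\mathbf{1}_d$). $\mathbb{P}$ and $\mathbb{E}_\tau[\cdot]=\mathbb{E}[\cdot\mid B_1,\dots,B_{\tau-1}]$ are over $B_\tau$. The instance $\mathbf{x}_{\tau^2}\in\mathbb{R}^d$ is fixed given the past; $h_{\tau^2}[i,i]=\frac{x_{\tau^2,i}^2}{\mathbb{P}[i\in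 B_\tau]}\mathbb{I}_{i\in B_\tau}$ and $h_{\tau^2}[i,j]=\frac{x_{\tau^2,i}x_{\tau^2,j}}{\mathbb{P}[i,j\in B_\tau]}\mathbb{I}_{i,j\in B_\tau}$ for $i\ne j$. *)

theory Defs
  imports "HOL-Probability.Probability"
begin

text \<open>Vectors in R^d are functions nat => real, indexed by [d] = {1..d}.\<close>

definition l1norm :: "nat \<Rightarrow> (nat \<Rightarrow> real) \<Rightarrow> real" where
  "l1norm d w = (\<Sum>i\<in>{1..d}. \<bar>w i\<bar>)"

definition first_index_pmf :: "nat \<Rightarrow> (nat \<Rightarrow> real) \<Rightarrow> nat pmf" where
  "first_index_pmf d w = pmf_of_list (map (\<lambda>i. (i, \<bar>w i\<bar> / l1norm d w)) [1..<d+1])"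

text \<open>SAMPLING(k,d,w): draw I1, then k-1 distinct indices uniformly without
  replacement from [d] minus I1 (i.e. a uniform (k-1)-subset); output the k-set.\<close>
definition SAMPLING :: "nat \<Rightarrow> nat \<Rightarrow> (nat \<Rightarrow> real) \<Rightarrow> nat set pmf" where
  "SAMPLING k d w =
     bind_pmf (first_index_pmf d w)
       (\<lambda>i. map_pmf (insert i) (pmf_of_set {S. S \<subseteq> {1..d} - {i} \<and> card S = k - 1}))"

definition hmat :: "nat set pmf \<Rightarrow> (nat \<Rightarrow> real) \<Rightarrow> nat set \<Rightarrow> nat \<Rightarrow> nat \<Rightarrow> real" where
  "hmat P x B i j =
     (if i = j then x i ^ 2 / measure_pmf.prob P {C. i \<in> C} * (if i \<in> B then 1 else 0)
      else x i * x j / measure_pmf.prob P {C. i \<in> C \<and> j \<in> C} * (if i \<in> B \<and> j \<in> B then 1 else 0))"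

definition zvec :: "nat \<Rightarrow> nat set pmf \<Rightarrow> (nat \<Rightarrow> real) \<Rightarrow> (nat \<Rightarrow> real) \<Rightarrow> nat set \<Rightarrow> nat \<Rightarrow> real" where
  "zvec d P x w B i = (\<Sum>j\<in>{1..d}. hmat P x B i j * w j) - x i * (\<Sum>j\<in>{1..d}. x j * w j)"

end

theory Submission
  imports Defs
begin

(* Write pi(A) for the probability that the sampled set contains A, so that
   z_i = sum_j x_i x_j w_j (1[i,j in B] / pi{i,j} - 1).  Conditioning on the first index,
   pi(A) = Q(A) beta(|A| - 1) + (1 - Q(A)) beta(|A|), where Q(A) is the total weight
   sum_{f in A} |w_f| / |w|_1 and beta(m) is the chance that a uniform (k-1)-subset of
   d - 1 points covers m given points.  Thus pi{i,j} >= beta(2), which gives the uniform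
   bound, and pi{i,j} >= q_j beta(1).  For the second moment,
   E z_i^2 <= sum_{j,l} |w_j| |w_l| pi{i,j,l} / (pi{i,j} pi{i,l}); off the diagonal
   log-concavity of beta yields beta(1) pi{i,j,l} <= pi{i,j} pi{i,l}, and on the diagonal
   the term |w_j|^2 / pi{i,j} is at most |w_j| |w|_1 / beta(1). *)

lemma card_supersets_of_card:
  assumes "finite U" "A \<subseteq> U"
  shows "card {S. S \<subseteq> U \<and> card S = r \<and> A \<subseteq> S}
           = (if card A \<le> r then (card U - card A) choose (r - card A) else 0)"
proof (cases "card A \<le> r")
  case True
  have fin_A: "finite A" using assms finite_subset by blast
  have "bij_betw (\<lambda>S. S - A) {S. S \<subseteq> U \<and> card S = r \<and> A \<subseteq> S}
          {T. T \<subseteq> U - A \<and> card T = r - card A}"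
  proof (rule bij_betw_byWitness[where f' = "\<lambda>T. T \<union> A"])
    show "(\<lambda>T. T \<union> A) ` {T. T \<subseteq> U - A \<and> card T = r - card A}
            \<subseteq> {S. S \<subseteq> U \<and> card S = r \<and> A \<subseteq> S}"
    proof clarify
      fix T assume T: "T \<subseteq> U - A" "card T = r - card A"
      then have "card (T \<union> A) = card T + card A"
        using fin_A assms(1) finite_subset by (intro card_Un_disjoint) auto
      then show "T \<union> A \<subseteq> U \<and> card (T \<union> A) = r \<and> A \<subseteq> T \<union> A"
        using T True assms(2) by auto
    qed
  qed (use fin_A in \<open>auto simp: card_Diff_subset\<close>)
  then have "card {S. S \<subseteq> U \<and> card S = r \<and> A \<subseteq> S} = card (U - A) choose (r - card A)"
    using assms(1) by (simp add: bij_betw_same_card n_subsets)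
  then show ?thesis using True fin_A assms(2) by (simp add: card_Diff_subset)
next
  case False
  have "{S. S \<subseteq> U \<and> card S = r \<and> A \<subseteq> S} = {}"
    using False assms(1) by (auto dest: card_mono[OF finite_subset])
  then show ?thesis using False by (metis card.empty)
qed

(* The probability that a uniformly random r-subset of an n-set contains a fixed m-subset. *)
definition incl_prob :: "nat \<Rightarrow> nat \<Rightarrow> nat \<Rightarrow> real" where
  "incl_prob n r m = (if m \<le> r then real ((n - m) choose (r - m)) else 0) / real (n choose r)"

lemma incl_prob_0: "r \<le> n \<Longrightarrow> incl_prob n r 0 = 1"
  by (simp add: incl_prob_def)

lemma incl_prob_Suc:
  assumes "r \<le> n"
  shows "incl_prob n r (Suc m) = incl_prob n r m * real (r - m) / real (n - m)"
proof (cases "m < r")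
  case True
  define a b where "a = n - m" and "b = r - m"
  have "0 < b" "b \<le> a" using True assms by (simp_all add: a_def b_def)
  then have "real b * real (a choose b) = real a * real ((a - 1) choose (b - 1))"
    using times_binomial_minus1_eq[of b a] by (metis of_nat_mult)
  moreover have "n - Suc m = a - 1" "r - Suc m = b - 1" by (simp_all add: a_def b_def)
  ultimately show ?thesis
    using True \<open>0 < b\<close> \<open>b \<le> a\<close> by (simp add: incl_prob_def a_def[symmetric] b_def[symmetric] field_simps)
qed (simp add: incl_prob_def)

lemma incl_prob_pos: "r \<le> n \<Longrightarrow> m \<le> r \<Longrightarrow> 0 < incl_prob n r m"
  by (simp add: incl_prob_def)

lemma incl_prob_eq_prod:
  "r \<le> n \<Longrightarrow> incl_prob n r m = (\<Prod>t<m. real (r - t) / real (n - t))"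
  by (induction m) (simp_all add: incl_prob_0 incl_prob_Suc)

lemma incl_ratio_antimono:
  assumes "r \<le> n"
  shows "real (r - Suc t) / real (n - Suc t) \<le> real (r - t) / real (n - t)"
  using assms by (cases "Suc t < r") (auto simp: divide_simps of_nat_diff algebra_simps)

lemma incl_ratio_le_1: "r \<le> n \<Longrightarrow> real (r - t) / real (n - t) \<le> 1"
  by (cases "t < n") (simp_all add: divide_le_eq_1)

lemma incl_prob_nonneg: "r \<le> n \<Longrightarrow> 0 \<le> incl_prob n r m"
  by (simp add: incl_prob_eq_prod prod_nonneg)

lemma incl_prob_antimono:
  assumes "r \<le> n" "m \<le> m'"
  shows "incl_prob n r m' \<le> incl_prob n r m"
  using assms(2)
proof (induction rule: dec_induct)
  case (step m')
  have "incl_prob n r (Suc m') \<le> incl_prob n r m' * 1"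
    unfolding incl_prob_Suc[OF assms(1)] times_divide_eq_right[symmetric]
    using incl_ratio_le_1[OF assms(1)] incl_prob_nonneg[OF assms(1)] by (intro mult_left_mono) auto
  then show ?case using step.IH by simp
qed simp

lemma incl_prob_log_concave:
  assumes "r \<le> n"
  shows "incl_prob n r m * incl_prob n r (Suc (Suc m)) \<le> (incl_prob n r (Suc m))\<^sup>2"
proof -
  define \<rho> where "\<rho> t = real (r - t) / real (n - t)" for t
  have "0 \<le> (incl_prob n r m)\<^sup>2 * \<rho> m" by (simp add: \<rho>_def)
  then have "(incl_prob n r m)\<^sup>2 * \<rho> m * \<rho> (Suc m) \<le> (incl_prob n r m)\<^sup>2 * \<rho> m * \<rho> m"
    using incl_ratio_antimono[OF assms] by (intro mult_left_mono) (auto simp: \<rho>_def)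
  then show ?thesis
    using incl_prob_Suc[OF assms] by (simp add: \<rho>_def power2_eq_square algebra_simps)
qed

locale sampling =
  fixes k d :: nat and w :: "nat \<Rightarrow> real"
  assumes k_le_d: "k \<le> d" and w_nonzero: "\<exists>i\<in>{1..d}. w i \<noteq> 0"
begin

abbreviation "P \<equiv> SAMPLING k d w"

definition q :: "nat \<Rightarrow> real" where "q j = \<bar>w j\<bar> / l1norm d w"

definition incl :: "nat set \<Rightarrow> real" where "incl A = measure_pmf.prob P {B. A \<subseteq> B}"

abbreviation "\<beta> \<equiv> incl_prob (d - 1) (k - 1)"

lemma pred_k_le_pred_d: "k - 1 \<le> d - 1"
  using k_le_d by simp

lemma l1norm_pos: "0 < l1norm d w"
proof -
  obtain i where i: "i \<in> {1..d}" "w i \<noteq> 0" using w_nonzero by blast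
  have "\<bar>w i\<bar> \<le> l1norm d w" unfolding l1norm_def using i by (intro member_le_sum) auto
  then show ?thesis using i by linarith
qed

lemma q_nonneg: "0 \<le> q j"
  using l1norm_pos by (simp add: q_def)

lemma sum_q: "(\<Sum>j\<in>{1..d}. q j) = 1"
  using l1norm_pos by (simp add: q_def l1norm_def flip: sum_divide_distrib)

lemma sum_q_le_1: "A \<subseteq> {1..d} \<Longrightarrow> sum q A \<le> 1"
  using sum_mono2[of "{1..d}" A q] q_nonneg sum_q by simp

lemma first_index_wf: "pmf_of_list_wf (map (\<lambda>i. (i, \<bar>w i\<bar> / l1norm d w)) [1..<d+1])"
proof (rule pmf_of_list_wfI)
  have "sum_list (map q [1..<d+1]) = sum q {1..<d+1}"
    by (simp only: sum_list_distinct_conv_sum_set distinct_upt set_upt)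
  also have "{1..<d+1} = {1..d}" by auto
  finally have "sum_list (map q [1..<d+1]) = 1"
    using sum_q by simp
  then show "sum_list (map snd (map (\<lambda>i. (i, \<bar>w i\<bar> / l1norm d w)) [1..<d+1])) = 1"
    by (simp only: map_map comp_def snd_conv q_def[abs_def])
qed (use l1norm_pos in auto)

lemma set_first_index: "set_pmf (first_index_pmf d w) \<subseteq> {1..d}"
  using set_pmf_of_list[OF first_index_wf] by (auto simp: first_index_pmf_def)

lemma pmf_first_index: "j \<in> {1..d} \<Longrightarrow> pmf (first_index_pmf d w) j = q j"
proof -
  assume j: "j \<in> {1..d}"
  let ?xs = "map (\<lambda>i. (i, \<bar>w i\<bar> / l1norm d w)) [1..<d+1]"
  have "sum_list (map snd (filter (\<lambda>z. fst z = j) ?xs))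
      = sum snd (set (filter (\<lambda>z. fst z = j) ?xs))"
    by (rule sum_list_distinct_conv_sum_set) (auto simp: distinct_map inj_on_def)
  also have "set (filter (\<lambda>z. fst z = j) ?xs) = {(j, q j)}"
    using j by (auto simp: q_def)
  finally show ?thesis
    unfolding first_index_pmf_def pmf_pmf_of_list[OF first_index_wf] by simp
qed

definition rest_sets :: "nat \<Rightarrow> nat set set" where
  "rest_sets f = {S. S \<subseteq> {1..d} - {f} \<and> card S = k - 1}"

lemma finite_rest_sets: "finite (rest_sets f)"
  unfolding rest_sets_def by (rule finite_subset[of _ "Pow {1..d}"]) auto

lemma card_rest_sets: "f \<in> {1..d} \<Longrightarrow> card (rest_sets f) = (d - 1) choose (k - 1)"
  unfolding rest_sets_def using n_subsets[of "{1..d} - {f}" "k - 1"] by simp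

lemma rest_sets_nonempty: "f \<in> {1..d} \<Longrightarrow> rest_sets f \<noteq> {}"
  using card_rest_sets[of f] k_le_d by (auto simp del: card_rest_sets)

lemma expectation_SAMPLING:
  "measure_pmf.expectation P g
     = (\<Sum>f\<in>{1..d}. q f * ((\<Sum>S\<in>rest_sets f. g (insert f S)) / real (card (rest_sets f))))"
proof -
  have "measure_pmf.expectation P g = (\<Sum>f\<in>{1..d}. pmf (first_index_pmf d w) f *\<^sub>R
      measure_pmf.expectation (map_pmf (insert f) (pmf_of_set (rest_sets f))) g)"
    unfolding SAMPLING_def rest_sets_def[symmetric]
    by (rule pmf_expectation_bind) (use set_first_index finite_rest_sets rest_sets_nonempty in auto)
  also have "\<dots> = (\<Sum>f\<in>{1..d}. q f * ((\<Sum>S\<in>rest_sets f. g (insert f S)) / real (card (rest_sets f))))"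
    using finite_rest_sets rest_sets_nonempty pmf_first_index
    by (intro sum.cong) (auto simp: integral_pmf_of_set)
  finally show ?thesis .
qed

lemma set_SAMPLING: "set_pmf P \<subseteq> Pow {1..d}"
proof
  fix B assume "B \<in> set_pmf P"
  then obtain f S where "f \<in> set_pmf (first_index_pmf d w)"
      "S \<in> set_pmf (pmf_of_set (rest_sets f))" "B = insert f S"
    unfolding SAMPLING_def rest_sets_def[symmetric] by auto
  moreover from this have "f \<in> {1..d}" using set_first_index by auto
  ultimately show "B \<in> Pow {1..d}"
    using set_pmf_of_set[OF rest_sets_nonempty finite_rest_sets] by (auto simp: rest_sets_def)
qed

lemma integrable_SAMPLING: "integrable (measure_pmf P) (g :: nat set \<Rightarrow> real)"
  using set_SAMPLING finite_subset by (intro integrable_measure_pmf_finite) blast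

lemma incl_eq_sum:
  assumes "A \<subseteq> {1..d}"
  shows "incl A = (\<Sum>f\<in>{1..d}. q f * \<beta> (card (A - {f})))"
proof -
  have inner: "(\<Sum>S\<in>rest_sets f. indicator {B. A \<subseteq> B} (insert f S)) / real (card (rest_sets f))
          = \<beta> (card (A - {f}))" if f: "f \<in> {1..d}" for f
  proof -
    have "rest_sets f \<inter> {S. A \<subseteq> insert f S}
            = {S. S \<subseteq> {1..d} - {f} \<and> card S = k - 1 \<and> A - {f} \<subseteq> S}"
      by (auto simp: rest_sets_def)
    then have "(\<Sum>S\<in>rest_sets f. indicator {B. A \<subseteq> B} (insert f S))
                 = real (card {S. S \<subseteq> {1..d} - {f} \<and> card S = k - 1 \<and> A - {f} \<subseteq> S})"
      using finite_rest_sets by (simp add: indicator_def)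
    then show ?thesis
      using assms f card_rest_sets[OF f]
      by (simp add: card_supersets_of_card incl_prob_def Diff_mono)
  qed
  have "incl A = measure_pmf.expectation P (indicator {B. A \<subseteq> B})"
    by (simp add: incl_def)
  also have "\<dots> = (\<Sum>f\<in>{1..d}. q f * \<beta> (card (A - {f})))"
    unfolding expectation_SAMPLING using inner by (intro sum.cong) auto
  finally show ?thesis .
qed

lemma incl_eq:
  assumes "A \<subseteq> {1..d}"
  shows "incl A = sum q A * \<beta> (card A - 1) + (1 - sum q A) * \<beta> (card A)"
proof -
  have fin: "finite A" using assms finite_subset by blast
  have "incl A = (\<Sum>f\<in>{1..d} - A. q f * \<beta> (card (A - {f}))) + (\<Sum>f\<in>A. q f * \<beta> (card (A - {f})))"
    unfolding incl_eq_sum[OF assms] by (rule sum.subset_diff[OF assms]) simp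
  also have "\<dots> = (\<Sum>f\<in>{1..d} - A. q f) * \<beta> (card A) + sum q A * \<beta> (card A - 1)"
    using fin by (simp add: sum_distrib_right)
  also have "(\<Sum>f\<in>{1..d} - A. q f) = 1 - sum q A"
    using sum.subset_diff[OF assms, of q] sum_q by simp
  finally show ?thesis by simp
qed

lemma incl_ge_beta_card:
  assumes "A \<subseteq> {1..d}"
  shows "\<beta> (card A) \<le> incl A"
proof -
  have "incl A - \<beta> (card A) = sum q A * (\<beta> (card A - 1) - \<beta> (card A))"
    unfolding incl_eq[OF assms] by (simp add: algebra_simps)
  moreover have "0 \<le> sum q A * (\<beta> (card A - 1) - \<beta> (card A))"
    using q_nonneg incl_prob_antimono[OF pred_k_le_pred_d, of "card A - 1" "card A"]
    by (intro mult_nonneg_nonneg sum_nonneg) auto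
  ultimately show ?thesis by linarith
qed

lemma incl_ge_weight:
  assumes "A \<subseteq> {1..d}"
  shows "sum q A * \<beta> (card A - 1) \<le> incl A"
  unfolding incl_eq[OF assms]
  using sum_q_le_1[OF assms] incl_prob_nonneg[OF pred_k_le_pred_d] by simp

lemma incl_nonneg: "0 \<le> incl A"
  by (simp add: incl_def)

lemma incl_le_1: "incl A \<le> 1"
  by (simp add: incl_def)

lemma card_pair_le_2: "card {i, j} \<le> 2"
  by (cases "i = j") auto

lemma incl_pair_ge_beta2:
  assumes "i \<in> {1..d}" "j \<in> {1..d}"
  shows "\<beta> 2 \<le> incl {i, j}"
proof -
  have "\<beta> 2 \<le> \<beta> (card {i, j})"
    using pred_k_le_pred_d card_pair_le_2 by (intro incl_prob_antimono) auto
  also have "\<dots> \<le> incl {i, j}" using assms by (intro incl_ge_beta_card) auto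
  finally show ?thesis .
qed

lemma incl_pair_ge_weight:
  assumes "i \<in> {1..d}" "j \<in> {1..d}"
  shows "q j * \<beta> 1 \<le> incl {i, j}"
proof -
  have "q j \<le> sum q {i, j}"
    using q_nonneg by (cases "i = j") (auto simp: add_nonneg_nonneg)
  moreover have "\<beta> 1 \<le> \<beta> (card {i, j} - 1)"
    using pred_k_le_pred_d card_pair_le_2[of i j] by (intro incl_prob_antimono) auto
  ultimately have "q j * \<beta> 1 \<le> sum q {i, j} * \<beta> (card {i, j} - 1)"
    using q_nonneg pred_k_le_pred_d by (intro mult_mono incl_prob_nonneg sum_nonneg) auto
  also have "\<dots> \<le> incl {i, j}" using assms by (intro incl_ge_weight) auto
  finally show ?thesis .
qed

lemma incl_triple_le_product_distinct:
  assumes "i \<in> {1..d}" "j \<in> {1..d}" "l \<in> {1..d}" "i \<noteq> j" "i \<noteq> l" "j \<noteq> l"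
  shows "\<beta> 1 * incl {i, j, l} \<le> incl {i, j} * incl {i, l}"
proof -
  define u a c where "u = q i" and "a = q j" and "c = q l"
  define \<delta> where "\<delta> = \<beta> 1 - \<beta> 2"
  have "card {i, j} = 2" "card {i, l} = 2" "card {i, j, l} = 3"
    and "sum q {i, j} = u + a" "sum q {i, l} = u + c" "sum q {i, j, l} = u + a + c"
    using assms(4-6) by (simp_all add: u_def a_def c_def)
  then have expand: "incl {i, j} = (u + a) * \<beta> 1 + (1 - (u + a)) * \<beta> 2"
      "incl {i, l} = (u + c) * \<beta> 1 + (1 - (u + c)) * \<beta> 2"
      "incl {i, j, l} = (u + a + c) * \<beta> 2 + (1 - (u + a + c)) * \<beta> 3"
    using incl_eq[of "{i, j}"] incl_eq[of "{i, l}"] incl_eq[of "{i, j, l}"] assms(1-3) by simp_all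
  have "u + a + c \<le> 1"
    using sum_q_le_1[of "{i, j, l}"] assms by (simp add: u_def a_def c_def)
  moreover have "0 \<le> u" "0 \<le> a" "0 \<le> c" by (simp_all add: u_def a_def c_def q_nonneg)
  moreover have "0 \<le> \<delta>" "0 \<le> \<beta> 2" "\<beta> 1 * \<beta> 3 \<le> (\<beta> 2)\<^sup>2"
    using incl_prob_antimono[OF pred_k_le_pred_d, of 1 2] incl_prob_nonneg[OF pred_k_le_pred_d]
      incl_prob_log_concave[OF pred_k_le_pred_d, of 1]
    by (simp_all add: \<delta>_def numeral_2_eq_2 numeral_3_eq_3)
  ultimately have "0 \<le> ((\<beta> 2)\<^sup>2 - \<beta> 1 * \<beta> 3) * (1 - (u + a + c)) + \<beta> 2 * \<delta> * u
                        + ((u + a) * (u + c)) * \<delta>\<^sup>2"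
    by (intro add_nonneg_nonneg mult_nonneg_nonneg) auto
  also have "\<dots> = incl {i, j} * incl {i, l} - \<beta> 1 * incl {i, j, l}"
    unfolding expand \<delta>_def by (simp add: algebra_simps power2_eq_square)
  finally show ?thesis by simp
qed

lemma incl_triple_le_product:
  assumes "i \<in> {1..d}" "j \<in> {1..d}" "l \<in> {1..d}" "j \<noteq> l"
  shows "\<beta> 1 * incl {i, j, l} \<le> incl {i, j} * incl {i, l}"
proof -
  have \<beta>1_le: "\<beta> 1 \<le> incl {i}"
    using incl_ge_beta_card[of "{i}"] assms(1) by simp
  consider "j = i" | "l = i" | "i \<noteq> j" "i \<noteq> l" by blast
  then show ?thesis
  proof cases
    case 1
    then show ?thesis using mult_right_mono[OF \<beta>1_le incl_nonneg] by simp
  next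
    case 2
    then show ?thesis using mult_left_mono[OF \<beta>1_le incl_nonneg[of "{i, j}"]]
      by (simp add: insert_commute mult.commute)
  next
    case 3
    then show ?thesis using incl_triple_le_product_distinct assms by blast
  qed
qed

end

locale estimator = sampling +
  assumes three_le_k: "3 \<le> k"
begin

lemma beta1_pos: "0 < \<beta> 1"
  using pred_k_le_pred_d three_le_k by (intro incl_prob_pos) auto

lemma beta2_pos: "0 < \<beta> 2"
  using pred_k_le_pred_d three_le_k by (intro incl_prob_pos) auto

lemma incl_pair_pos: "i \<in> {1..d} \<Longrightarrow> j \<in> {1..d} \<Longrightarrow> 0 < incl {i, j}"
  using incl_pair_ge_beta2 beta2_pos by fastforce

definition hweight :: "nat \<Rightarrow> nat \<Rightarrow> nat set \<Rightarrow> real" where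
  "hweight i j B = of_bool ({i, j} \<subseteq> B) / incl {i, j}"

lemma hmat_eq: "hmat P x B i j = x i * x j * hweight i j B"
proof (cases "i = j")
  case True
  then have "incl {i, j} = measure_pmf.prob P {C. i \<in> C}" by (simp add: incl_def)
  then show ?thesis using True by (simp add: hmat_def hweight_def power2_eq_square)
next
  case False
  have "incl {i, j} = measure_pmf.prob P {C. i \<in> C \<and> j \<in> C}" by (simp add: incl_def)
  then show ?thesis using False by (simp add: hmat_def hweight_def)
qed

lemma zvec_eq: "zvec d P x w B i = (\<Sum>j\<in>{1..d}. x i * x j * w j * (hweight i j B - 1))"
  unfolding zvec_def hmat_eq by (simp add: sum_distrib_left sum_subtractf algebra_simps)

lemma hweight_deviation_le:
  assumes "i \<in> {1..d}" "j \<in> {1..d}"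
  shows "\<bar>hweight i j B - 1\<bar> \<le> 1 / \<beta> 2"
proof -
  have "1 / incl {i, j} \<le> 1 / \<beta> 2" "1 \<le> 1 / incl {i, j}" "1 \<le> 1 / \<beta> 2"
    using incl_pair_ge_beta2[OF assms] incl_pair_pos[OF assms] incl_le_1 beta2_pos
      order_trans[OF incl_pair_ge_beta2[OF assms] incl_le_1]
    by (simp_all add: frac_le)
  then show ?thesis by (auto simp: hweight_def)
qed

lemma zvec_abs_le:
  assumes x: "\<forall>j\<in>{1..d}. \<bar>x j\<bar> \<le> 1" and i: "i \<in> {1..d}"
  shows "\<bar>zvec d P x w B i\<bar> \<le> l1norm d w / \<beta> 2"
proof -
  have "\<bar>zvec d P x w B i\<bar> \<le> (\<Sum>j\<in>{1..d}. \<bar>x i * x j * w j * (hweight i j B - 1)\<bar>)"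
    unfolding zvec_eq by (rule sum_abs)
  also have "\<dots> \<le> (\<Sum>j\<in>{1..d}. \<bar>w j\<bar> * (1 / \<beta> 2))"
  proof (rule sum_mono)
    fix j assume j: "j \<in> {1..d}"
    have "\<bar>x i * x j\<bar> \<le> 1" using x i j by (simp add: abs_mult mult_le_one)
    then have "\<bar>x i * x j\<bar> * (\<bar>w j\<bar> * \<bar>hweight i j B - 1\<bar>) \<le> \<bar>w j\<bar> * \<bar>hweight i j B - 1\<bar>"
      by (intro mult_left_le_one_le) auto
    also have "\<dots> \<le> \<bar>w j\<bar> * (1 / \<beta> 2)"
      using hweight_deviation_le[OF i j] by (intro mult_left_mono) auto
    finally show "\<bar>x i * x j * w j * (hweight i j B - 1)\<bar> \<le> \<bar>w j\<bar> * (1 / \<beta> 2)"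
      by (simp add: abs_mult mult.assoc)
  qed
  also have "\<dots> = l1norm d w / \<beta> 2" by (simp add: l1norm_def sum_divide_distrib)
  finally show ?thesis .
qed

lemma expectation_hweight_deviations:
  assumes "i \<in> {1..d}" "j \<in> {1..d}" "l \<in> {1..d}"
  shows "measure_pmf.expectation P (\<lambda>B. (hweight i j B - 1) * (hweight i l B - 1))
           = incl {i, j, l} / (incl {i, j} * incl {i, l}) - 1"
proof -
  define a c where "a = incl {i, j}" and "c = incl {i, l}"
  have "a > 0" "c > 0" using incl_pair_pos assms by (simp_all add: a_def c_def)
  have "(\<lambda>B. (hweight i j B - 1) * (hweight i l B - 1))
          = (\<lambda>B. indicator {C. {i, j, l} \<subseteq> C} B / (a * c) - indicator {C. {i, j} \<subseteq> C} B / a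
                 - indicator {C. {i, l} \<subseteq> C} B / c + 1)"
    using \<open>a > 0\<close> \<open>c > 0\<close>
    by (auto simp: fun_eq_iff indicator_def hweight_def a_def[symmetric] c_def[symmetric] field_simps)
  then have "measure_pmf.expectation P (\<lambda>B. (hweight i j B - 1) * (hweight i l B - 1))
               = incl {i, j, l} / (a * c) - incl {i, j} / a - incl {i, l} / c + 1"
    by (simp add: integrable_SAMPLING incl_def)
  then show ?thesis using \<open>a > 0\<close> \<open>c > 0\<close> by (simp add: a_def c_def)
qed

lemma weighted_incl_ratio_le:
  assumes i: "i \<in> {1..d}" and j: "j \<in> {1..d}" and l: "l \<in> {1..d}"
  shows "\<bar>w j\<bar> * \<bar>w l\<bar> * (incl {i, j, l} / (incl {i, j} * incl {i, l}))
           \<le> \<bar>w j\<bar> * \<bar>w l\<bar> / \<beta> 1 + (if j = l then \<bar>w j\<bar> * l1norm d w / \<beta> 1 else 0)"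
proof (cases "j = l")
  case False
  have "incl {i, j, l} / (incl {i, j} * incl {i, l}) \<le> 1 / \<beta> 1"
    using incl_triple_le_product[OF i j l False] incl_pair_pos[OF i j] incl_pair_pos[OF i l] beta1_pos
    by (simp add: field_simps)
  then have "\<bar>w j\<bar> * \<bar>w l\<bar> * (incl {i, j, l} / (incl {i, j} * incl {i, l}))
               \<le> \<bar>w j\<bar> * \<bar>w l\<bar> * (1 / \<beta> 1)"
    by (rule mult_left_mono) simp
  then show ?thesis using False by simp
next
  case True
  have "\<bar>w j\<bar> * \<bar>w j\<bar> / incl {i, j} \<le> \<bar>w j\<bar> * l1norm d w / \<beta> 1"
  proof (cases "w j = 0")
    case False
    then have "0 < q j * \<beta> 1" using l1norm_pos beta1_pos by (simp add: q_def)
    then have "\<bar>w j\<bar> * \<bar>w j\<bar> / incl {i, j} \<le> \<bar>w j\<bar> * \<bar>w j\<bar> / (q j * \<beta> 1)"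
      using incl_pair_ge_weight[OF i j] by (intro divide_left_mono) auto
    also have "\<dots> = \<bar>w j\<bar> * l1norm d w / \<beta> 1"
      using False l1norm_pos beta1_pos by (simp add: q_def field_simps abs_mult_self_eq)
    finally show ?thesis .
  qed simp
  moreover have "0 \<le> \<bar>w j\<bar> * \<bar>w j\<bar> / \<beta> 1" using beta1_pos by simp
  ultimately show ?thesis
    using True incl_pair_pos[OF i j] by simp
qed

lemma expectation_zvec_sq:
  assumes "i \<in> {1..d}"
  shows "measure_pmf.expectation P (\<lambda>B. (zvec d P x w B i)\<^sup>2)
           = (\<Sum>j\<in>{1..d}. \<Sum>l\<in>{1..d}. (x i * x j * w j) * (x i * x l * w l)
                 * (incl {i, j, l} / (incl {i, j} * incl {i, l}) - 1))"
proof -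
  have "measure_pmf.expectation P (\<lambda>B. (zvec d P x w B i)\<^sup>2)
      = measure_pmf.expectation P (\<lambda>B. \<Sum>j\<in>{1..d}. \<Sum>l\<in>{1..d}.
          (x i * x j * w j) * (x i * x l * w l) * ((hweight i j B - 1) * (hweight i l B - 1)))"
    unfolding zvec_eq power2_eq_square sum_product by (simp add: algebra_simps)
  then show ?thesis
    using expectation_hweight_deviations[OF assms] by (simp add: integrable_SAMPLING)
qed

lemma zvec_second_moment_le:
  assumes x: "\<forall>j\<in>{1..d}. \<bar>x j\<bar> \<le> 1" and i: "i \<in> {1..d}"
  shows "measure_pmf.expectation P (\<lambda>B. (zvec d P x w B i)\<^sup>2) \<le> 2 * (l1norm d w)\<^sup>2 / \<beta> 1"
proof -
  define a where "a j = x i * x j * w j" for j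
  define R where "R j l = incl {i, j, l} / (incl {i, j} * incl {i, l})" for j l
  have "measure_pmf.expectation P (\<lambda>B. (zvec d P x w B i)\<^sup>2)
          = (\<Sum>j\<in>{1..d}. \<Sum>l\<in>{1..d}. (a j * a l) * R j l) - (\<Sum>j\<in>{1..d}. a j)\<^sup>2"
  proof -
    have "(\<Sum>j\<in>{1..d}. \<Sum>l\<in>{1..d}. (a j * a l) * (R j l - 1))
            = (\<Sum>j\<in>{1..d}. \<Sum>l\<in>{1..d}. (a j * a l) * R j l) - (\<Sum>j\<in>{1..d}. a j)\<^sup>2"
      by (simp add: algebra_simps sum_subtractf power2_eq_square sum_product)
    then show ?thesis unfolding expectation_zvec_sq[OF i] a_def R_def .
  qed
  also have "\<dots> \<le> (\<Sum>j\<in>{1..d}. \<Sum>l\<in>{1..d}. \<bar>w j\<bar> * \<bar>w l\<bar> * R j l)"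
  proof -
    have "a j * a l * R j l \<le> \<bar>w j\<bar> * \<bar>w l\<bar> * R j l" if "j \<in> {1..d}" "l \<in> {1..d}" for j l
    proof -
      have "\<bar>a j\<bar> \<le> \<bar>w j\<bar>" "\<bar>a l\<bar> \<le> \<bar>w l\<bar>"
        using x i that by (auto simp: a_def abs_mult intro!: mult_left_le_one_le mult_le_one)
      then have "\<bar>a j\<bar> * \<bar>a l\<bar> \<le> \<bar>w j\<bar> * \<bar>w l\<bar>"
        by (intro mult_mono) auto
      then have "a j * a l \<le> \<bar>w j\<bar> * \<bar>w l\<bar>"
        by (metis abs_ge_self abs_mult order_trans)
      then show ?thesis by (intro mult_right_mono) (simp_all add: R_def incl_nonneg)
    qed
    then have "(\<Sum>j\<in>{1..d}. \<Sum>l\<in>{1..d}. (a j * a l) * R j l)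
                 \<le> (\<Sum>j\<in>{1..d}. \<Sum>l\<in>{1..d}. \<bar>w j\<bar> * \<bar>w l\<bar> * R j l)"
      by (intro sum_mono) auto
    then show ?thesis using zero_le_power2[of "\<Sum>j\<in>{1..d}. a j"] by linarith
  qed
  also have "\<dots> \<le> (\<Sum>j\<in>{1..d}. \<Sum>l\<in>{1..d}.
      \<bar>w j\<bar> * \<bar>w l\<bar> / \<beta> 1 + (if j = l then \<bar>w j\<bar> * l1norm d w / \<beta> 1 else 0))"
    using weighted_incl_ratio_le[OF i] unfolding R_def by (intro sum_mono) auto
  also have "\<dots> = (\<Sum>j\<in>{1..d}. \<Sum>l\<in>{1..d}. \<bar>w j\<bar> * \<bar>w l\<bar>) / \<beta> 1
                     + (\<Sum>j\<in>{1..d}. \<bar>w j\<bar>) * l1norm d w / \<beta> 1"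
    by (simp add: sum.distrib sum_divide_distrib sum_distrib_right)
  also have "\<dots> = 2 * (l1norm d w)\<^sup>2 / \<beta> 1"
    by (simp add: l1norm_def power2_eq_square sum_product)
  finally show ?thesis .
qed

end

theorem corollary1:
  fixes k d :: nat and w x :: "nat \<Rightarrow> real"
  assumes "3 \<le> k" and "k \<le> d - 3" and "d \<ge> 3"
    and "\<exists>i\<in>{1..d}. w i \<noteq> 0"
    and "\<forall>i\<in>{1..d}. \<bar>x i\<bar> \<le> 1"
    and "i \<in> {1..d}"
  shows "(\<forall>B\<in>set_pmf (SAMPLING k d w).
            \<bar>zvec d (SAMPLING k d w) x w B i\<bar>
              \<le> (real d - 1) * (real d - 2) / ((real k - 1) * (real k - 2)) * l1norm d w)
       \<and> measure_pmf.expectation (SAMPLING k d w) (\<lambda>B. (zvec d (SAMPLING k d w) x w B i)^2)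
              \<le> 2 * (real d - 1) / (real k - 1) * (l1norm d w)^2"
proof -
  interpret estimator k d w
    using assms by unfold_locales auto
  have "k - 1 \<le> d - 1" using assms by simp
  then have "incl_prob (d - 1) (k - 1) 1 = (real k - 1) / (real d - 1)"
    and "incl_prob (d - 1) (k - 1) 2 = (real k - 1) * (real k - 2) / ((real d - 1) * (real d - 2))"
    using assms by (simp_all add: incl_prob_eq_prod numeral_2_eq_2 of_nat_diff)
  then show ?thesis
    using zvec_abs_le[OF assms(5,6)] zvec_second_moment_le[OF assms(5,6)] by (simp add: field_simps)
qed

end
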